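(* If a sign pattern matrix $A$ allows algebraic positivity, then every super-pattern of $A$ allows algebraic positivity.
   Context: A sign pattern matrix is a matrix with entries in $\{+,-,0\}$; its qualitative class $Q(A)$ is the set of real matrices obtained by replacing each $+$ by some positive number, each $-$ by some negative number and each $0$ by $0$. A real square matrix $M$ is algebraically positive if there is a real polynomial $f$ such that every entry of $f(M)$ is positive; $A$ allows algebraic positivity if some matrix in $Q(A)$ is algebraically positive. A sign pattern $X$ is a subpattern of $A$ if $X$ is obtained from $A$ by replacing some (possibly none) of its nonzero entries with $0$; then $A$ is a super-pattern of $X$. *)

theory Defs
  imports "HOL-Analysis.Analysis" "HOL-Computational_Algebra.Polynomial"
begin

datatype sign = Pos | Neg | Zero

type_synonym 'n sign_pattern = "'n \<Rightarrow> 'n \<Rightarrow> sign"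

definition sign_of :: "real \<Rightarrow> sign" where
  "sign_of x = (if x > 0 then Pos else if x < 0 then Neg else Zero)"

definition qual_class :: "'n::finite sign_pattern \<Rightarrow> (real^'n^'n) set" where
  "qual_class A = {M. \<forall>i j. sign_of (M $ i $ j) = A i j}"

definition matrix_pow :: "real^'n^'n \<Rightarrow> nat \<Rightarrow> real^'n^'n" where
  "matrix_pow M k = ((\<lambda>X. X ** M) ^^ k) (mat 1)"

definition poly_mat :: "real poly \<Rightarrow> real^'n^'n \<Rightarrow> real^'n^'n" where
  "poly_mat f M = (\<Sum>k\<le>degree f. coeff f k *\<^sub>R matrix_pow M k)"

definition algebraically_positive :: "real^'n^'n \<Rightarrow> bool" where
  "algebraically_positive M \<longleftrightarrow> (\<exists>f. \<forall>i j. poly_mat f M $ i $ j > 0)"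

definition allows_alg_pos :: "'n::finite sign_pattern \<Rightarrow> bool" where
  "allows_alg_pos A \<longleftrightarrow> (\<exists>M \<in> qual_class A. algebraically_positive M)"

definition subpattern :: "'n sign_pattern \<Rightarrow> 'n sign_pattern \<Rightarrow> bool" where
  "subpattern X A \<longleftrightarrow> (\<forall>i j. X i j = A i j \<or> X i j = Zero)"

end

theory Submission
  imports Defs
begin

text \<open>Algebraic positivity is an open condition on real matrices, since each entry of f(M)
  depends continuously on M. A matrix realizing A is therefore still algebraically positive after
  a small perturbation, and perturbing exactly the entries where A is zero and B is not, in the
  direction of their signs in B, yields a matrix realizing B.\<close>

lemma continuous_on_matrix_mult [continuous_intros]:
  fixes f g :: "'a::topological_space \<Rightarrow> real^'n::finite^'n"
  assumes "continuous_on S f" and "continuous_on S g"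
  shows "continuous_on S (\<lambda>x. f x ** g x)"
  unfolding matrix_matrix_mult_def
  by (intro continuous_intros assms)

lemma matrix_pow_Suc: "matrix_pow M (Suc k) = matrix_pow M k ** M"
  by (simp add: matrix_pow_def)

lemma continuous_on_matrix_pow [continuous_intros]:
  fixes f :: "'a::topological_space \<Rightarrow> real^'n::finite^'n"
  assumes "continuous_on S f"
  shows "continuous_on S (\<lambda>x. matrix_pow (f x) k)"
proof (induction k)
  case 0
  then show ?case by (simp add: matrix_pow_def)
next
  case (Suc k)
  then show ?case
    unfolding matrix_pow_Suc by (intro continuous_intros assms)
qed

lemma continuous_on_poly_mat [continuous_intros]:
  fixes f :: "'a::topological_space \<Rightarrow> real^'n::finite^'n"
  assumes "continuous_on S f"
  shows "continuous_on S (\<lambda>x. poly_mat p (f x))"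
  unfolding poly_mat_def by (intro continuous_intros assms)

lemma open_algebraically_positive: "open {M :: real^'n::finite^'n. algebraically_positive M}"
proof -
  have "open {M :: real^'n^'n. \<forall>i j. poly_mat p M $ i $ j > 0}" for p
    unfolding Collect_all_eq
    by (intro open_INT finite ballI open_Collect_less continuous_intros)
  then show ?thesis
    unfolding algebraically_positive_def Collect_ex_eq by (intro open_UN ballI)
qed

definition sign_value :: "sign \<Rightarrow> real" where
  "sign_value s = (case s of Pos \<Rightarrow> 1 | Neg \<Rightarrow> -1 | Zero \<Rightarrow> 0)"

lemma sign_of_scaled_sign_value:
  assumes "t > 0"
  shows "sign_of (t * sign_value s) = s"
  using assms by (cases s) (simp_all add: sign_value_def sign_of_def)

definition added_entries :: "'n::finite sign_pattern \<Rightarrow> 'n sign_pattern \<Rightarrow> real^'n^'n" where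
  "added_entries A B = (\<chi> i j. if A i j = Zero then sign_value (B i j) else 0)"

lemma add_added_entries_in_qual_class:
  assumes "M \<in> qual_class A" and "subpattern A B" and "t > 0"
  shows "M + t *\<^sub>R added_entries A B \<in> qual_class B"
  unfolding qual_class_def
proof (intro CollectI allI)
  fix i j
  have sign_M: "sign_of (M $ i $ j) = A i j"
    using assms(1) by (simp add: qual_class_def)
  show "sign_of ((M + t *\<^sub>R added_entries A B) $ i $ j) = B i j"
  proof (cases "A i j = Zero")
    case True
    then have "M $ i $ j = 0"
      using sign_M by (auto simp: sign_of_def split: if_splits)
    then show ?thesis
      using True by (simp add: added_entries_def sign_of_scaled_sign_value assms(3))
  next
    case False
    then have "B i j = A i j"
      using assms(2) unfolding subpattern_def by metis
    then show ?thesis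
      using False sign_M by (simp add: added_entries_def)
  qed
qed

theorem theorem3p7:
  fixes A B :: "'n::finite sign_pattern"
  assumes "allows_alg_pos A"
    and "subpattern A B"
  shows "allows_alg_pos B"
proof -
  obtain M where "M \<in> qual_class A" and "algebraically_positive M"
    using assms(1) unfolding allows_alg_pos_def by blast
  let ?E = "added_entries A B"
  have "((\<lambda>t. M + t *\<^sub>R ?E) \<longlongrightarrow> M) (at_right 0)"
    by (auto intro!: tendsto_eq_intros)
  then have "\<forall>\<^sub>F t in at_right 0. algebraically_positive (M + t *\<^sub>R ?E)"
    using open_algebraically_positive \<open>algebraically_positive M\<close>
    by (auto dest: topological_tendstoD)
  moreover have "\<forall>\<^sub>F t in at_right 0. (t::real) > 0"
    by (simp add: eventually_at_right_less)
  ultimately obtain t :: real where "t > 0" and "algebraically_positive (M + t *\<^sub>R ?E)"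
    using eventually_happens'[OF trivial_limit_at_right_real] eventually_conj by blast
  then show ?thesis
    unfolding allows_alg_pos_def
    using add_added_entries_in_qual_class[OF \<open>M \<in> qual_class A\<close> assms(2)] by blast
qed

end
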